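(* Let $q$, $\phi,\theta$, $U_1$ and $a^*,b^*,c^*$ be as in the context. (i) For fixed $c>0$ let $\gamma(x)=\int_c^xdt/R_1(t,\lambda)$ and $U_2=(P_1\cos2\gamma+(Q_1/R_1)\sin2\gamma-(2/R_1)\cos2\gamma,\ Q_1\cos2\gamma+2\sin2\gamma,\ R_1\cos2\gamma)^T$, $U_3=(P_1\sin2\gamma-(Q_1/R_1)\cos2\gamma-(2/R_1)\sin2\gamma,\ Q_1\sin2\gamma-2\cos2\gamma,\ R_1\sin2\gamma)^T$; for any constants $\beta_2,\beta_3$, if $R$ is the third component of $\beta_2U_2+\beta_3U_3$, then for every $x_0>0$, $\lim_{N\to\infty}\int_{x_0}^NR\,dx\big/\int_{x_0}^NR_1\,dx=0$. (ii) $a^*(\lambda)>0$ and $c^*(\lambda)>0$ for all $\lambda\in(0,\infty)$.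
   Context: $-y''+qy=\lambda y$ on $(0,\infty)$, $\lambda>0$, $q(x)=\frac{q_0}{x^2}+\frac{q_1}{x}+\sum_{n\ge0}q_{n+2}x^n$ with real coefficients, series convergent on $(0,\infty)$, $q_0\ge-\tfrac14$, $q_0,q_1$ not both zero, $q\to0$ at $\infty$, and for some $x_0>0$ either $q\in L_1(x_0,\infty)$ or ($q'\in L_1(x_0,\infty)$, $q\in AC_{loc}[x_0,\infty)$). $\phi,\theta$: with $q_0=\nu^2-\frac14$, $\nu\ge0$, $\phi=x^{1/2+\nu}(1+\sum_{n\ge1}a_n(\lambda)x^n)$ is the Frobenius solution at $0$ for the larger indicial root, $y_2$ a second (possibly logarithmic) Frobenius solution with leading coefficient $1$ and coefficients real polynomials in $\lambda$, $C=W(\phi,y_2)\ne0$ real, $\theta=y_2/C$ so $W(\phi,\theta)=1$. Appell system: $(P,Q,R)'=M(P,Q,R)^T$, $M=\begin{pmatrix}0&\lambda-q&0\\-2&0&2(\lambda-q)\\0&-1&0\end{pmatrix}$; $U_1=(P_1,Q_1,R_1)^T$ is its unique solution with $\lim_{x\to\infty}U_1=(\sqrt\lambda,0,1/\sqrt\lambda)^T$ (and $R_1>0$ on $(0,\infty)$). $a^*,b^*,c^*$ are the real coefficients with $U_1=a^*((\theta')^2,-2\theta\theta',\theta^2)^T+b^*(\theta'\phi',-(\theta\phi'+\theta'\phi),\theta\phi)^T+c^*((\phi')^2,-2\phi\phi',\phi^2)^T$. *)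

theory Defs
  imports "HOL-Analysis.Analysis"
begin

definition wronskian :: "(real \<Rightarrow> real) \<Rightarrow> (real \<Rightarrow> real) \<Rightarrow> real \<Rightarrow> real" where
  "wronskian f g x = f x * deriv g x - deriv f x * g x"

definition is_solution :: "(real \<Rightarrow> real) \<Rightarrow> real \<Rightarrow> (real \<Rightarrow> real) \<Rightarrow> bool" where
  "is_solution q lam y \<longleftrightarrow>
     (\<forall>x>0. y differentiable (at x) \<and> (deriv y) differentiable (at x) \<and>
            - deriv (deriv y) x + q x * y x = lam * y x)"

definition abs_cont_on_interval :: "(real \<Rightarrow> real) \<Rightarrow> real \<Rightarrow> real \<Rightarrow> bool" where
  "abs_cont_on_interval f a b \<longleftrightarrow>
     (\<forall>\<epsilon>>0. \<exists>\<delta>>0. \<forall>(n::nat) (u::nat \<Rightarrow> real) v.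
        (\<forall>i<n. a \<le> u i \<and> u i \<le> v i \<and> v i \<le> b) \<and>
        (\<forall>i<n. \<forall>j<n. i \<noteq> j \<longrightarrow> v i \<le> u j \<or> v j \<le> u i) \<and>
        (\<Sum>i<n. v i - u i) < \<delta>
        \<longrightarrow> (\<Sum>i<n. \<bar>f (v i) - f (u i)\<bar>) < \<epsilon>)"

definition AC_loc_from :: "(real \<Rightarrow> real) \<Rightarrow> real \<Rightarrow> bool" where
  "AC_loc_from f x0 \<longleftrightarrow> (\<forall>b\<ge>x0. abs_cont_on_interval f x0 b)"

definition appell_solution ::
  "(real \<Rightarrow> real) \<Rightarrow> real \<Rightarrow> (real \<Rightarrow> real) \<Rightarrow> (real \<Rightarrow> real) \<Rightarrow> (real \<Rightarrow> real) \<Rightarrow> bool" where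
  "appell_solution q lam P Q R \<longleftrightarrow>
     (\<forall>x>0. (P has_real_derivative ((lam - q x) * Q x)) (at x) \<and>
            (Q has_real_derivative (-2 * P x + 2 * (lam - q x) * R x)) (at x) \<and>
            (R has_real_derivative (- Q x)) (at x))"

definition gamma_fun :: "(real \<Rightarrow> real) \<Rightarrow> real \<Rightarrow> real \<Rightarrow> real" where
  "gamma_fun R1 c x =
     (if c \<le> x then integral {c..x} (\<lambda>t. 1 / R1 t) else - integral {x..c} (\<lambda>t. 1 / R1 t))"

definition U2 :: "(real \<Rightarrow> real) \<Rightarrow> (real \<Rightarrow> real) \<Rightarrow> (real \<Rightarrow> real) \<Rightarrow> real \<Rightarrow> real \<Rightarrow> real \<times> real \<times> real" where
  "U2 P1 Q1 R1 c x =
     (let g = gamma_fun R1 c x in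
      (P1 x * cos (2*g) + (Q1 x / R1 x) * sin (2*g) - (2 / R1 x) * cos (2*g),
       Q1 x * cos (2*g) + 2 * sin (2*g),
       R1 x * cos (2*g)))"

definition U3 :: "(real \<Rightarrow> real) \<Rightarrow> (real \<Rightarrow> real) \<Rightarrow> (real \<Rightarrow> real) \<Rightarrow> real \<Rightarrow> real \<Rightarrow> real \<times> real \<times> real" where
  "U3 P1 Q1 R1 c x =
     (let g = gamma_fun R1 c x in
      (P1 x * sin (2*g) - (Q1 x / R1 x) * cos (2*g) - (2 / R1 x) * sin (2*g),
       Q1 x * sin (2*g) - 2 * cos (2*g),
       R1 x * sin (2*g)))"

end

theory Submission
  imports Defs
begin

text \<open>
  (i) With \<open>\<gamma>' = 1/R\<^sub>1\<close> and \<open>R\<^sub>1' = -Q\<^sub>1\<close>, the third component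
  \<open>R\<^sub>1 (\<beta>\<^sub>2 cos 2\<gamma> + \<beta>\<^sub>3 sin 2\<gamma>)\<close> of \<open>\<beta>\<^sub>2 U\<^sub>2 + \<beta>\<^sub>3 U\<^sub>3\<close> is the derivative of the bounded
  function \<open>R\<^sub>1\<^sup>2 (\<beta>\<^sub>2 sin 2\<gamma> - \<beta>\<^sub>3 cos 2\<gamma>)/2\<close> up to the term \<open>R\<^sub>1 Q\<^sub>1 (\<beta>\<^sub>2 sin 2\<gamma> - \<beta>\<^sub>3 cos 2\<gamma>)\<close>,
  which tends to \<open>0\<close>. So its integral over \<open>[x\<^sub>0, N]\<close> is \<open>o(N)\<close>, whereas the integral of
  \<open>R\<^sub>1\<close> grows like \<open>N/\<surd>\<lambda>\<close>.

  (ii) Since \<open>W(\<phi>, \<theta>) = 1\<close>, the representation of \<open>U\<^sub>1\<close> gives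
  \<open>P\<^sub>1 R\<^sub>1 - Q\<^sub>1\<^sup>2/4 = a\<^sup>* c\<^sup>* - b\<^sup>*\<^sup>2/4\<close>, and letting \<open>x \<rightarrow> \<infinity>\<close> this constant is \<open>1\<close>. Hence the
  binary form \<open>a\<^sup>* \<theta>\<^sup>2 + b\<^sup>* \<theta>\<phi> + c\<^sup>* \<phi>\<^sup>2\<close> is definite, and it is positive because it takes
  the value \<open>R\<^sub>1(1) > 0\<close>; so \<open>a\<^sup>*, c\<^sup>* > 0\<close>.
\<close>

lemma integral_from_has_real_derivative:
  fixes f :: "real \<Rightarrow> real"
  assumes "continuous_on {a..} f" "a < t"
  shows "((\<lambda>x. integral {a..x} f) has_real_derivative f t) (at t)"
proof -
  have "continuous_on {a..t+1} f"
    using assms(1) by (rule continuous_on_subset) auto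
  with integral_has_real_derivative[of a "t+1" f t] assms(2) show ?thesis
    by (simp add: at_within_Icc_at)
qed

lemma integral_from_over_length_tendsto:
  fixes f :: "real \<Rightarrow> real"
  assumes "continuous_on {a..} f" "(f \<longlongrightarrow> L) at_top"
  shows "((\<lambda>N. integral {a..N} f / N) \<longlongrightarrow> L) at_top"
proof (rule lhospital_at_top_at_top[where g' = "\<lambda>_. 1" and f' = f])
  show "\<forall>\<^sub>F x in at_top. ((\<lambda>N. integral {a..N} f) has_real_derivative f x) (at x)"
    using eventually_gt_at_top[of a]
    by eventually_elim (rule integral_from_has_real_derivative[OF assms(1)])
qed (use assms(2) in \<open>auto intro!: derivative_eq_intros filterlim_ident\<close>)

lemma integral_eq_boundary_plus_integral:
  fixes f E F :: "real \<Rightarrow> real"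
  assumes F_deriv: "\<And>x. x \<ge> a \<Longrightarrow> (F has_real_derivative f x - E x) (at x)"
    and E_cont: "continuous_on {a..} E" and "a \<le> N"
  shows "integral {a..N} f = F N - F a + integral {a..N} E"
proof -
  have "((\<lambda>x. f x - E x) has_integral (F N - F a)) {a..N}"
  proof (rule fundamental_theorem_of_calculus[OF \<open>a \<le> N\<close>])
    fix x assume "x \<in> {a..N}"
    with F_deriv[of x] show "(F has_vector_derivative (f x - E x)) (at x within {a..N})"
      by (auto simp: has_real_derivative_iff_has_vector_derivative intro: has_vector_derivative_at_within)
  qed
  moreover have "E integrable_on {a..N}"
    using continuous_on_subset[OF E_cont] by (intro integrable_continuous_real) auto
  ultimately have "((\<lambda>x. f x - E x + E x) has_integral (F N - F a + integral {a..N} E)) {a..N}"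
    by (intro has_integral_add) auto
  then show ?thesis
    by (simp add: integral_unique)
qed

lemma integral_ratio_tendsto_0:
  fixes f g E F :: "real \<Rightarrow> real"
  assumes F_deriv: "\<And>x. x \<ge> a \<Longrightarrow> (F has_real_derivative f x - E x) (at x)"
    and F_bounded: "eventually (\<lambda>x. \<bar>F x\<bar> \<le> B) at_top"
    and E_cont: "continuous_on {a..} E" and E_lim: "(E \<longlongrightarrow> 0) at_top"
    and g_cont: "continuous_on {a..} g" and g_lim: "(g \<longlongrightarrow> L) at_top" and "L \<noteq> 0"
  shows "((\<lambda>N. integral {a..N} f / integral {a..N} g) \<longlongrightarrow> 0) at_top"
proof -
  have inverse_lim: "((\<lambda>N::real. inverse N) \<longlongrightarrow> 0) at_top"
    by (rule tendsto_inverse_0_at_top[OF filterlim_ident])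
  have "((\<lambda>N. F N / N) \<longlongrightarrow> 0) at_top"
  proof (rule Lim_null_comparison)
    show "\<forall>\<^sub>F N in at_top. norm (F N / N) \<le> B * inverse N"
      using F_bounded eventually_gt_at_top[of 0]
      by eventually_elim (simp add: divide_right_mono field_simps)
    show "((\<lambda>N. B * inverse N) \<longlongrightarrow> 0) at_top"
      using tendsto_mult_right_zero[OF inverse_lim] .
  qed
  moreover have "((\<lambda>N. F a / N) \<longlongrightarrow> 0) at_top"
    using tendsto_mult_right_zero[OF inverse_lim, of "F a"] by (simp add: divide_inverse)
  moreover have "((\<lambda>N. integral {a..N} E / N) \<longlongrightarrow> 0) at_top"
    by (rule integral_from_over_length_tendsto[OF E_cont E_lim])
  ultimately have "((\<lambda>N. F N / N - F a / N + integral {a..N} E / N) \<longlongrightarrow> 0) at_top"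
    using tendsto_add[OF tendsto_diff] by fastforce
  then have "((\<lambda>N. integral {a..N} f / N) \<longlongrightarrow> 0) at_top"
  proof (rule Lim_transform_eventually)
    show "\<forall>\<^sub>F N in at_top. F N / N - F a / N + integral {a..N} E / N = integral {a..N} f / N"
      using eventually_ge_at_top[of a]
      by eventually_elim
        (simp add: integral_eq_boundary_plus_integral[OF F_deriv E_cont] add_divide_distrib diff_divide_distrib)
  qed
  then have "((\<lambda>N. (integral {a..N} f / N) / (integral {a..N} g / N)) \<longlongrightarrow> 0 / L) at_top"
    using integral_from_over_length_tendsto[OF g_cont g_lim] \<open>L \<noteq> 0\<close> by (rule tendsto_divide)
  then have "((\<lambda>N. (integral {a..N} f / N) / (integral {a..N} g / N)) \<longlongrightarrow> 0) at_top"
    by simp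
  then show ?thesis
    by (rule Lim_transform_eventually) (use eventually_gt_at_top[of 0] in \<open>eventually_elim, simp\<close>)
qed

lemma gamma_fun_has_real_derivative:
  assumes cont: "continuous_on {0<..} (\<lambda>t. 1 / R t)" and "c > 0" "t > 0"
  shows "(gamma_fun R c has_real_derivative 1 / R t) (at t)"
proof -
  define a where "a = min t c / 2"
  have a: "0 < a" "a < t" "a < c"
    using assms unfolding a_def by auto
  have f_cont: "continuous_on {a..} (\<lambda>t. 1 / R t)"
    using a by (intro continuous_on_subset[OF cont]) auto
  have f_int: "(\<lambda>t. 1 / R t) integrable_on {a..b}" for b
    using continuous_on_subset[OF f_cont] by (intro integrable_continuous_real) auto
  have gamma_eq: "gamma_fun R c x = integral {a..x} (\<lambda>t. 1 / R t) - integral {a..c} (\<lambda>t. 1 / R t)"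
    if "a \<le> x" for x
  proof (cases "c \<le> x")
    case True
    then have "integral {a..c} (\<lambda>t. 1 / R t) + integral {c..x} (\<lambda>t. 1 / R t)
        = integral {a..x} (\<lambda>t. 1 / R t)"
      using a f_int by (intro Henstock_Kurzweil_Integration.integral_combine) auto
    with True show ?thesis
      by (simp add: gamma_fun_def)
  next
    case False
    then have "integral {a..x} (\<lambda>t. 1 / R t) + integral {x..c} (\<lambda>t. 1 / R t)
        = integral {a..c} (\<lambda>t. 1 / R t)"
      using that f_int by (intro Henstock_Kurzweil_Integration.integral_combine) auto
    with False show ?thesis
      by (simp add: gamma_fun_def)
  qed
  have "((\<lambda>x. integral {a..x} (\<lambda>t. 1 / R t) - integral {a..c} (\<lambda>t. 1 / R t))
      has_real_derivative 1 / R t) (at t)"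
    using DERIV_diff[OF integral_from_has_real_derivative[OF f_cont \<open>a < t\<close>] DERIV_const] by simp
  then show ?thesis
    by (rule has_field_derivative_transform_within_open[where S = "{a<..}"])
      (use a gamma_eq in auto)
qed

lemma third_component_U2_U3:
  "snd (snd (\<beta>2 *\<^sub>R U2 P Q R c x + \<beta>3 *\<^sub>R U3 P Q R c x))
     = R x * (\<beta>2 * cos (2 * gamma_fun R c x) + \<beta>3 * sin (2 * gamma_fun R c x))"
  by (simp add: U2_def U3_def Let_def algebra_simps)

lemma abs_sin_cos_combination_le:
  fixes b2 b3 y :: real
  shows "\<bar>b2 * sin y - b3 * cos y\<bar> \<le> \<bar>b2\<bar> + \<bar>b3\<bar>"
proof -
  have "\<bar>b2 * sin y - b3 * cos y\<bar> \<le> \<bar>b2 * sin y\<bar> + \<bar>b3 * cos y\<bar>"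
    by (rule abs_triangle_ineq4)
  also have "\<dots> \<le> \<bar>b2\<bar> + \<bar>b3\<bar>"
    unfolding abs_mult by (intro add_mono mult_left_le) auto
  finally show ?thesis .
qed

lemma integral_ratio_cos_sin_gamma_tendsto_0:
  fixes R Q :: "real \<Rightarrow> real"
  assumes R_deriv: "\<And>x. x > 0 \<Longrightarrow> (R has_real_derivative - Q x) (at x)"
    and Q_cont: "continuous_on {0<..} Q"
    and R_pos: "\<And>x. x > 0 \<Longrightarrow> R x > 0"
    and R_lim: "(R \<longlongrightarrow> r) at_top" and "r \<noteq> 0"
    and Q_lim: "(Q \<longlongrightarrow> 0) at_top"
    and "c > 0" "x0 > 0"
  shows "((\<lambda>N. integral {x0..N} (\<lambda>x. R x * (\<beta>2 * cos (2 * gamma_fun R c x) + \<beta>3 * sin (2 * gamma_fun R c x)))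
             / integral {x0..N} R) \<longlongrightarrow> 0) at_top"
proof -
  have from_x0_subset: "{x0..} \<subseteq> {0<..}"
    using \<open>x0 > 0\<close> by auto
  define \<gamma> where "\<gamma> = gamma_fun R c"
  define s where "s x = \<beta>2 * sin (2 * \<gamma> x) - \<beta>3 * cos (2 * \<gamma> x)" for x
  define K where "K = \<bar>\<beta>2\<bar> + \<bar>\<beta>3\<bar>"
  have s_bound: "\<bar>s x\<bar> \<le> K" for x
    unfolding s_def K_def by (rule abs_sin_cos_combination_le)
  have R_cont: "continuous_on {0<..} R"
    using R_deriv by (intro continuous_at_imp_continuous_on) (auto intro: DERIV_isCont)
  have "continuous_on {0<..} (\<lambda>t. 1 / R t)"
    using R_pos by (intro continuous_on_divide[OF continuous_on_const R_cont]) (metis greaterThan_iff less_irrefl)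
  then have \<gamma>_deriv: "(\<gamma> has_real_derivative 1 / R x) (at x)" if "x > 0" for x
    unfolding \<gamma>_def using \<open>c > 0\<close> that by (rule gamma_fun_has_real_derivative)
  have s_deriv: "(s has_real_derivative 2 / R x * (\<beta>2 * cos (2 * \<gamma> x) + \<beta>3 * sin (2 * \<gamma> x))) (at x)"
    if "x > 0" for x
    unfolding s_def by (auto intro!: derivative_eq_intros \<gamma>_deriv[OF that] simp: algebra_simps)
  define F where "F x = R x ^ 2 / 2 * s x" for x
  define E where "E x = R x * Q x * s x" for x
  have F_deriv: "(F has_real_derivative
      R x * (\<beta>2 * cos (2 * \<gamma> x) + \<beta>3 * sin (2 * \<gamma> x)) - E x) (at x)" if "x \<ge> x0" for x
  proof -
    have "x > 0" "R x \<noteq> 0"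
      using that \<open>x0 > 0\<close> R_pos[of x] by auto
    then show ?thesis
      unfolding F_def E_def
      by (auto intro!: derivative_eq_intros R_deriv s_deriv simp: field_simps power2_eq_square)
  qed
  have E_cont: "continuous_on {x0..} E"
  proof -
    have "continuous_on {x0..} \<gamma>"
      using \<open>x0 > 0\<close> by (intro continuous_at_imp_continuous_on ballI DERIV_isCont[OF \<gamma>_deriv]) auto
    moreover have "continuous_on {x0..} R" "continuous_on {x0..} Q"
      using continuous_on_subset[OF R_cont from_x0_subset] continuous_on_subset[OF Q_cont from_x0_subset] .
    ultimately show ?thesis
      unfolding E_def s_def by (intro continuous_intros)
  qed
  have E_lim: "(E \<longlongrightarrow> 0) at_top"
  proof (rule Lim_null_comparison)
    show "\<forall>\<^sub>F x in at_top. norm (E x) \<le> \<bar>R x * Q x\<bar> * K"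
      unfolding E_def by (simp add: abs_mult mult_left_mono s_bound)
    have "((\<lambda>x. \<bar>R x * Q x\<bar> * K) \<longlongrightarrow> \<bar>r * 0\<bar> * K) at_top"
      using R_lim Q_lim by (intro tendsto_intros)
    then show "((\<lambda>x. \<bar>R x * Q x\<bar> * K) \<longlongrightarrow> 0) at_top"
      by simp
  qed
  have F_bounded: "\<forall>\<^sub>F x in at_top. \<bar>F x\<bar> \<le> r ^ 2 / 2 * K + 1"
  proof -
    have "((\<lambda>x. R x ^ 2 / 2 * K) \<longlongrightarrow> r ^ 2 / 2 * K) at_top"
      using R_lim by (intro tendsto_intros) auto
    then have "\<forall>\<^sub>F x in at_top. R x ^ 2 / 2 * K < r ^ 2 / 2 * K + 1"
      by (rule order_tendstoD) simp
    moreover have "\<bar>F x\<bar> \<le> R x ^ 2 / 2 * K" for x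
      unfolding F_def by (simp add: abs_mult mult_left_mono s_bound)
    ultimately show ?thesis
      by (elim eventually_mono) (meson less_imp_le order_trans)
  qed
  from integral_ratio_tendsto_0[OF F_deriv F_bounded E_cont E_lim
      continuous_on_subset[OF R_cont from_x0_subset] R_lim \<open>r \<noteq> 0\<close>]
  show ?thesis
    unfolding \<gamma>_def .
qed

lemma wronskian_divide_right:
  assumes "\<forall>t>0. \<theta> t = y t / C" and "y differentiable (at x)" and "x > 0"
  shows "wronskian \<phi> \<theta> x = wronskian \<phi> y x / C"
proof -
  have "((\<lambda>t. y t / C) has_real_derivative deriv y x / C) (at x)"
    using assms(2) by (intro DERIV_cdivide) (simp add: DERIV_deriv_iff_real_differentiable)
  then have "(\<theta> has_real_derivative deriv y x / C) (at x)"
    by (rule has_field_derivative_transform_within_open[where S = "{0<..}"]) (use assms in auto)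
  then have "deriv \<theta> x = deriv y x / C"
    by (rule DERIV_imp_deriv)
  then show ?thesis
    using assms(1,3) by (simp add: wronskian_def diff_divide_distrib)
qed

lemma product_quadratic_combination_invariant:
  fixes a b c :: real
  assumes "wronskian \<phi> \<theta> x = 1"
    and "P = a * (deriv \<theta> x)\<^sup>2 + b * (deriv \<theta> x * deriv \<phi> x) + c * (deriv \<phi> x)\<^sup>2"
    and "Q = a * (-2 * \<theta> x * deriv \<theta> x) + b * (- (\<theta> x * deriv \<phi> x + deriv \<theta> x * \<phi> x))
           + c * (-2 * \<phi> x * deriv \<phi> x)"
    and "R = a * (\<theta> x)\<^sup>2 + b * (\<theta> x * \<phi> x) + c * (\<phi> x)\<^sup>2"
  shows "P * R - Q\<^sup>2 / 4 = a * c - b\<^sup>2 / 4"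
proof -
  have "P * R - Q\<^sup>2 / 4 = (a * c - b\<^sup>2 / 4) * (wronskian \<phi> \<theta> x)\<^sup>2"
    unfolding assms(2-4) wronskian_def by (simp add: field_simps power2_eq_square)
  with assms(1) show ?thesis
    by simp
qed

lemma quadratic_form_coeffs_pos:
  fixes a b c x y :: real
  assumes det: "a*c - b^2/4 > 0" and pos: "a*x^2 + b*(x*y) + c*y^2 > 0"
  shows "a > 0 \<and> c > 0"
proof -
  have ac: "a * c > 0"
    using det zero_le_power2[of b] by linarith
  have "\<not> a < 0"
  proof
    assume "a < 0"
    have "4 * a * (a*x^2 + b*(x*y) + c*y^2) = (2*a*x + b*y)^2 + 4 * (a*c - b^2/4) * y^2"
      by (simp add: algebra_simps power2_eq_square)
    also have "\<dots> \<ge> 0"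
      using det by simp
    finally show False
      using \<open>a < 0\<close> pos by (simp add: zero_le_mult_iff)
  qed
  with ac show ?thesis
    by (auto simp: zero_less_mult_iff)
qed

theorem mainTheorem9:
  fixes q :: "real \<Rightarrow> real" and q0 q1 :: real and qs :: "nat \<Rightarrow> real"
    and lam \<nu> :: real
    and \<phi> y2 \<theta> :: "real \<Rightarrow> real" and C :: real
    and P1 Q1 R1 :: "real \<Rightarrow> real" and astar bstar cstar :: real
  assumes lam_pos: "lam > 0"
    and q_conv: "\<forall>x>0. summable (\<lambda>n. qs n * x ^ n)"
    and q_def: "\<forall>x>0. q x = q0 / x\<^sup>2 + q1 / x + (\<Sum>n. qs n * x ^ n)"
    and q0_ge: "q0 \<ge> -1/4"
    and q01_nz: "q0 \<noteq> 0 \<or> q1 \<noteq> 0"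
    and q_lim: "(q \<longlongrightarrow> 0) at_top"
    and q_int: "\<exists>x0>0. q absolutely_integrable_on {x0..} \<or>
                 ((\<lambda>x. deriv q x) absolutely_integrable_on {x0..} \<and> AC_loc_from q x0)"
    and nu: "\<nu> \<ge> 0" "q0 = \<nu>\<^sup>2 - 1/4"
    and phi_sol: "is_solution q lam \<phi>"
    and phi_frob: "\<exists>a::nat \<Rightarrow> real. a 0 = 1 \<and> (\<forall>x>0. summable (\<lambda>n. a n * x ^ n)) \<and>
                    (\<forall>x>0. \<phi> x = x powr (1/2 + \<nu>) * (\<Sum>n. a n * x ^ n))"
    and y2_sol: "is_solution q lam y2"
    and y2_frob: "\<exists>(\<kappa>::real) (b::nat \<Rightarrow> real).
                    (\<forall>x>0. summable (\<lambda>n. b n * x ^ n)) \<and>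
                    (\<nu> > 0 \<longrightarrow> b 0 = 1) \<and> (\<nu> = 0 \<longrightarrow> \<kappa> = 1) \<and>
                    (\<forall>x>0. y2 x = \<kappa> * \<phi> x * ln x + x powr (1/2 - \<nu>) * (\<Sum>n. b n * x ^ n))"
    and C_def: "\<forall>x>0. wronskian \<phi> y2 x = C"
    and C_nz: "C \<noteq> 0"
    and theta_def: "\<forall>x>0. \<theta> x = y2 x / C"
    and U1_sol: "appell_solution q lam P1 Q1 R1"
    and U1_lim: "(P1 \<longlongrightarrow> sqrt lam) at_top" "(Q1 \<longlongrightarrow> 0) at_top"
                "(R1 \<longlongrightarrow> 1 / sqrt lam) at_top"
    and R1_pos: "\<forall>x>0. R1 x > 0"
    and coeffs: "\<forall>x>0.
        P1 x = astar * (deriv \<theta> x)\<^sup>2 + bstar * (deriv \<theta> x * deriv \<phi> x) + cstar * (deriv \<phi> x)\<^sup>2 \<and>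
        Q1 x = astar * (-2 * \<theta> x * deriv \<theta> x)
               + bstar * (- (\<theta> x * deriv \<phi> x + deriv \<theta> x * \<phi> x))
               + cstar * (-2 * \<phi> x * deriv \<phi> x) \<and>
        R1 x = astar * (\<theta> x)\<^sup>2 + bstar * (\<theta> x * \<phi> x) + cstar * (\<phi> x)\<^sup>2"
  shows "(\<forall>c>0. \<forall>\<beta>2 \<beta>3 :: real. \<forall>x0>0.
            let R = (\<lambda>x. snd (snd (\<beta>2 *\<^sub>R U2 P1 Q1 R1 c x + \<beta>3 *\<^sub>R U3 P1 Q1 R1 c x))) in
            ((\<lambda>N. integral {x0..N} R / integral {x0..N} R1) \<longlongrightarrow> 0) at_top)
         \<and> astar > 0 \<and> cstar > 0"
proof -
  have R1_deriv: "\<And>x. x > 0 \<Longrightarrow> (R1 has_real_derivative - Q1 x) (at x)"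
    and Q1_deriv: "\<And>x. x > 0 \<Longrightarrow> (Q1 has_real_derivative -2 * P1 x + 2 * (lam - q x) * R1 x) (at x)"
    using U1_sol unfolding appell_solution_def by auto
  have Q1_cont: "continuous_on {0<..} Q1"
    using Q1_deriv by (intro continuous_at_imp_continuous_on) (auto intro: DERIV_isCont)
  have part_i: "\<forall>c>0. \<forall>\<beta>2 \<beta>3 :: real. \<forall>x0>0.
      let R = (\<lambda>x. snd (snd (\<beta>2 *\<^sub>R U2 P1 Q1 R1 c x + \<beta>3 *\<^sub>R U3 P1 Q1 R1 c x))) in
      ((\<lambda>N. integral {x0..N} R / integral {x0..N} R1) \<longlongrightarrow> 0) at_top"
    unfolding Let_def third_component_U2_U3 using lam_pos
    by (intro allI impI integral_ratio_cos_sin_gamma_tendsto_0[OF R1_deriv Q1_cont R1_pos[rule_format]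
        U1_lim(3) _ U1_lim(2)]) auto
  have wronskian_1: "wronskian \<phi> \<theta> x = 1" if "x > 0" for x
    using wronskian_divide_right[OF theta_def _ that] C_def C_nz y2_sol that
    by (simp add: is_solution_def)
  have "((\<lambda>x. P1 x * R1 x - (Q1 x)\<^sup>2 / 4) \<longlongrightarrow> sqrt lam * (1 / sqrt lam) - 0\<^sup>2 / 4) at_top"
    using U1_lim by (intro tendsto_intros) auto
  moreover have "\<forall>\<^sub>F x in at_top. P1 x * R1 x - (Q1 x)\<^sup>2 / 4 = astar * cstar - bstar\<^sup>2 / 4"
    using eventually_gt_at_top[of 0]
    by eventually_elim (use wronskian_1 coeffs in \<open>blast intro: product_quadratic_combination_invariant\<close>)
  ultimately have "((\<lambda>_::real. astar * cstar - bstar\<^sup>2 / 4) \<longlongrightarrow> sqrt lam * (1 / sqrt lam) - 0\<^sup>2 / 4) at_top"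
    by (rule Lim_transform_eventually)
  then have det: "astar * cstar - bstar\<^sup>2 / 4 > 0"
    using lam_pos by (simp add: tendsto_const_iff)
  have "astar * (\<theta> 1)\<^sup>2 + bstar * (\<theta> 1 * \<phi> 1) + cstar * (\<phi> 1)\<^sup>2 > 0"
    using R1_pos[rule_format, of 1] coeffs[rule_format, of 1] by simp
  with det part_i show ?thesis
    using quadratic_form_coeffs_pos by blast
qed

end
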